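(* Let $m>0$, $\alpha>0$ and $\omega\ge 0$ with $\alpha>2\omega$, and consider the dynamical system \[ \frac{d\phi}{dt}=\gamma,\qquad \frac{d\gamma}{dt}=\frac{1}{m}\bigl(-\gamma+\omega-k\sin\phi\bigr),\qquad \frac{dk}{dt}=\alpha\cos\phi-k, \] with $(\phi,\gamma,k)\in[-\pi,\pi)\times\mathbb{R}\times\mathbb{R}$ ($\phi$ taken modulo $2\pi$). Write $\theta:=\tfrac12\arcsin\!\bigl(\tfrac{2\omega}{\alpha}\bigr)$ and consider its four equilibrium points $P_1=(\theta,0,\alpha\cos\theta)$, $P_2=(\tfrac{\pi}{2}-\theta,0,\alpha\sin\theta)$, $P_3=(-\pi+\theta,0,-\alpha\cos\theta)$, $P_4=(-\tfrac{\pi}{2}-\theta,0,-\alpha\sin\theta)$. Let $u:=\alpha+\sqrt{\alpha^2-4\omega^2}$ and $v:=\alpha-\sqrt{\alpha^2-4\omega^2}$. Then: \begin{enumerate} \item Let $\Gamma_1$ be the region in the $(u,v)$ plane with $0\le v\le u\le \frac{2(m^2-m+1)}{3m}$ that is bounded by the curves \[ v=u-\frac{\bigl(m+1+\sqrt{4(m+1)^2-6m(u+2)}\bigr)\bigl(\sqrt{4(m+1)^2-6m(u+2)}-2(m+1)\bigr)^2}{54m^2}, \] \[ v=u-\frac{\bigl(m+1-\sqrt{4(m+1)^2-6m(u+2)}\bigr)\bigl(\sqrt{4(m+1)^2-6m(u+2)}+2(m+1)\bigr)^2}{54m^2}. \] If $(u,v)\notin\Gamma_1$, then the Jacobian matrix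 of the system at the equilibria $P_1$ and $P_3$ has a negative real eigenvalue and two complex-conjugate eigenvalues with negative real part. Otherwise, the Jacobian matrix at $P_1$ and $P_3$ has three negative real eigenvalues. \item Let $\Gamma_2$ be the region in the $(u,v)$ plane with $0\le v\le u$ and $v\le \frac{2(m^2-m+1)}{3m}$ that is bounded by the curves \[ u=v-\frac{\bigl(m+1+\sqrt{4(m+1)^2-6m(v+2)}\bigr)\bigl(\sqrt{4(m+1)^2-6m(v+2)}-2(m+1)\bigr)^2}{54m^2}, \] \[ u=v-\frac{\bigl(m+1-\sqrt{4(m+1)^2-6m(v+2)}\bigr)\bigl(\sqrt{4(m+1)^2-6m(v+2)}+2(m+1)\bigr)^2}{54m^2}. \] If $(u,v)\notin\Gamma_2$, then the Jacobian matrix at the equilibria $P_2$ and $P_4$ has a positive real eigenvalue and two complex-conjugate eigenvalues with negative real part. Otherwise, the Jacobian matrix at $P_2$ and $P_4$ has one positive real eigenvalue and two negative real eigenvalues. \end{enumerate}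
   Context: This system describes the phase difference $\phi$, its derivative $\gamma$, and the (rescaled) adaptive coupling strength $k$ of two identical-mass Kuramoto oscillators with inertia and Hebbian learning; $m>0$ is the (rescaled) mass, $\alpha>0$ the learning enhancement factor, and $\omega\ge 0$ the intrinsic-frequency difference (the paper assumes $\omega\ge0$ throughout). The Jacobian matrix at an equilibrium $(\phi^*,\gamma^*,k^* )$ is the Jacobian of the vector field $(\gamma,\ \frac1m(-\gamma+\omega-k\sin\phi),\ \alpha\cos\phi-k)$ with respect to $(\phi,\gamma,k)$, evaluated at that point. *)

theory Defs
  imports "HOL-Analysis.Analysis"
begin

text \<open>The vector field (phi, gamma, k) -> (gamma, (-gamma + omega - k sin phi)/m, alpha cos phi - k),
  coordinates: p$1 = phi, p$2 = gamma, p$3 = k.\<close>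
definition kur_field :: "real \<Rightarrow> real \<Rightarrow> real \<Rightarrow> real^3 \<Rightarrow> real^3" where
  "kur_field m \<alpha> \<omega> p =
     vector [p$2, (- (p$2) + \<omega> - p$3 * sin (p$1)) / m, \<alpha> * cos (p$1) - p$3]"

definition kur_jacobian :: "real \<Rightarrow> real \<Rightarrow> real \<Rightarrow> real^3 \<Rightarrow> real^3^3" where
  "kur_jacobian m \<alpha> \<omega> p = jacobian (kur_field m \<alpha> \<omega>) (at p)"

definition char_poly_fun :: "real^'n^'n \<Rightarrow> complex \<Rightarrow> complex" where
  "char_poly_fun A x = det (\<chi> i j. (if i = j then x else 0) - complex_of_real (A$i$j))"

definition neg_real_and_stable_pair :: "real^3^3 \<Rightarrow> bool" where
  "neg_real_and_stable_pair A \<longleftrightarrow> (\<exists>(r::real) (z::complex). r < 0 \<and> Im z \<noteq> 0 \<and> Re z < 0 \<and>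
     (\<forall>x. char_poly_fun A x = (x - of_real r) * (x - z) * (x - cnj z)))"

definition pos_real_and_stable_pair :: "real^3^3 \<Rightarrow> bool" where
  "pos_real_and_stable_pair A \<longleftrightarrow> (\<exists>(r::real) (z::complex). r > 0 \<and> Im z \<noteq> 0 \<and> Re z < 0 \<and>
     (\<forall>x. char_poly_fun A x = (x - of_real r) * (x - z) * (x - cnj z)))"

definition three_neg_real :: "real^3^3 \<Rightarrow> bool" where
  "three_neg_real A \<longleftrightarrow> (\<exists>(a::real) (b::real) (c::real). a < 0 \<and> b < 0 \<and> c < 0 \<and>
     (\<forall>x. char_poly_fun A x = (x - of_real a) * (x - of_real b) * (x - of_real c)))"

definition one_pos_two_neg_real :: "real^3^3 \<Rightarrow> bool" where
  "one_pos_two_neg_real A \<longleftrightarrow> (\<exists>(a::real) (b::real) (c::real). a > 0 \<and> b < 0 \<and> c < 0 \<and>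
     (\<forall>x. char_poly_fun A x = (x - of_real a) * (x - of_real b) * (x - of_real c)))"

definition kur_theta :: "real \<Rightarrow> real \<Rightarrow> real" where
  "kur_theta \<alpha> \<omega> = arcsin (2 * \<omega> / \<alpha>) / 2"

definition kur_u :: "real \<Rightarrow> real \<Rightarrow> real" where
  "kur_u \<alpha> \<omega> = \<alpha> + sqrt (\<alpha>\<^sup>2 - 4 * \<omega>\<^sup>2)"

definition kur_v :: "real \<Rightarrow> real \<Rightarrow> real" where
  "kur_v \<alpha> \<omega> = \<alpha> - sqrt (\<alpha>\<^sup>2 - 4 * \<omega>\<^sup>2)"

definition P1 :: "real \<Rightarrow> real \<Rightarrow> real^3" where
  "P1 \<alpha> \<omega> = vector [kur_theta \<alpha> \<omega>, 0, \<alpha> * cos (kur_theta \<alpha> \<omega>)]"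

definition P2 :: "real \<Rightarrow> real \<Rightarrow> real^3" where
  "P2 \<alpha> \<omega> = vector [pi / 2 - kur_theta \<alpha> \<omega>, 0, \<alpha> * sin (kur_theta \<alpha> \<omega>)]"

definition P3 :: "real \<Rightarrow> real \<Rightarrow> real^3" where
  "P3 \<alpha> \<omega> = vector [- pi + kur_theta \<alpha> \<omega>, 0, - \<alpha> * cos (kur_theta \<alpha> \<omega>)]"

definition P4 :: "real \<Rightarrow> real \<Rightarrow> real^3" where
  "P4 \<alpha> \<omega> = vector [- pi / 2 - kur_theta \<alpha> \<omega>, 0, - \<alpha> * sin (kur_theta \<alpha> \<omega>)]"

definition kur_S :: "real \<Rightarrow> real \<Rightarrow> real" where
  "kur_S m w = sqrt (4 * (m + 1)\<^sup>2 - 6 * m * (w + 2))"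

definition Dplus :: "real \<Rightarrow> real \<Rightarrow> real" where
  "Dplus m w = (m + 1 + kur_S m w) * (kur_S m w - 2 * (m + 1))\<^sup>2 / (54 * m\<^sup>2)"

definition Dminus :: "real \<Rightarrow> real \<Rightarrow> real" where
  "Dminus m w = (m + 1 - kur_S m w) * (kur_S m w + 2 * (m + 1))\<^sup>2 / (54 * m\<^sup>2)"

definition kur_bound :: "real \<Rightarrow> real" where
  "kur_bound m = 2 * (m\<^sup>2 - m + 1) / (3 * m)"

definition Gamma1 :: "real \<Rightarrow> (real \<times> real) set" where
  "Gamma1 m = {(u, v). 0 \<le> v \<and> v \<le> u \<and> u \<le> kur_bound m \<and>
      min (u - Dplus m u) (u - Dminus m u) \<le> v \<and> v \<le> max (u - Dplus m u) (u - Dminus m u)}"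

definition Gamma2 :: "real \<Rightarrow> (real \<times> real) set" where
  "Gamma2 m = {(u, v). 0 \<le> v \<and> v \<le> u \<and> v \<le> kur_bound m \<and>
      min (v - Dplus m v) (v - Dminus m v) \<le> u \<and> u \<le> max (v - Dplus m v) (v - Dminus m v)}"

end

(*
  At an equilibrium (phi, 0, k) the Jacobian has characteristic polynomial
    x^3 + (m+1)/m x^2 + (1 + k cos phi)/m x + (k cos phi - alpha sin^2 phi)/m,
  and k cos phi, alpha sin^2 phi equal u/2, v/2 at P1, P3 and v/2, u/2 at P2, P4.
  A real cubic has three real roots iff its discriminant is nonnegative, and for
  these coefficients the discriminant is a positive multiple of (D+ - d)(d - D-),
  where d = u - v resp. v - u and D+-, the two boundary curves of Gamma_1 resp.
  Gamma_2, are the values of d at which it vanishes (it is negative beyond the bound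
  on w, where the square root defining D+- becomes imaginary).
  The signs follow from Vieta: at P1, P3 all coefficients are positive and satisfy
  the Routh-Hurwitz inequality b2 b1 > b0, so every root lies in the open left
  half-plane; at P2, P4 the constant term is negative, so the roots have positive
  product and negative sum.
*)
theory Submission
  imports Defs "HOL-Real_Asymp.Real_Asymp"
begin

lemma has_derivative_vec_nth [derivative_intros]:
  "((\<lambda>x. x $ i) has_derivative (\<lambda>h. h $ i)) F"
  using bounded_linear_vec_nth by (rule bounded_linear_imp_has_derivative)

lemma has_derivative_vec_componentwise:
  fixes f :: "'a::real_normed_vector \<Rightarrow> real^'n"
  shows "(f has_derivative f') (at a within S) \<longleftrightarrow>
    (\<forall>i. ((\<lambda>x. f x $ i) has_derivative (\<lambda>h. f' h $ i)) (at a within S))"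
proof -
  have Basis_cart: "(\<forall>b\<in>(Basis :: (real^'n) set). P b) \<longleftrightarrow> (\<forall>i. P (axis i 1))" for P
    by (simp add: Basis_vec_def)
  show ?thesis
    using has_derivative_componentwise_within[of f f' a S]
    by (simp only: Basis_cart inner_axis real_inner_1_right)
qed

lemma kur_field_has_derivative:
  "(kur_field m \<alpha> \<omega> has_derivative
     (\<lambda>h. vector [h$2, - (h$2 + h$3 * sin (p$1) + p$3 * cos (p$1) * h$1) / m,
                  - \<alpha> * sin (p$1) * h$1 - h$3])) (at p)"
  apply (rule has_derivative_vec_componentwise[THEN iffD2])
  unfolding forall_3 kur_field_def vector_3 divide_inverse
  by (auto intro!: derivative_eq_intros simp: algebra_simps)

lemma kur_jacobian_eq:
  "kur_jacobian m \<alpha> \<omega> p =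
     vector [vector [0, 1, 0],
             vector [- p$3 * cos (p$1) / m, - 1 / m, - sin (p$1) / m],
             vector [- \<alpha> * sin (p$1), 0, -1]]"
  unfolding kur_jacobian_def jacobian_def
    frechet_derivative_at[OF kur_field_has_derivative, symmetric]
  by (simp add: vec_eq_iff forall_3 matrix_def axis_def)

lemma char_poly_fun_kur_jacobian:
  assumes "m \<noteq> 0"
  shows "char_poly_fun (kur_jacobian m \<alpha> \<omega> p) x =
    x^3 + of_real ((m + 1) / m) * x^2 + of_real ((1 + p$3 * cos (p$1)) / m) * x
      + of_real ((p$3 * cos (p$1) - \<alpha> * sin (p$1)^2) / m)"
  using assms
  by (simp add: char_poly_fun_def det_3 kur_jacobian_eq field_simps power2_eq_square power3_eq_cube)

lemma real_cubic_has_root: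
  fixes b2 b1 b0 :: real
  obtains a where "a^3 + b2 * a^2 + b1 * a + b0 = 0"
proof -
  let ?f = "\<lambda>x::real. x^3 + b2 * x^2 + b1 * x + b0"
  have "\<forall>\<^sub>F x in at_top. 0 < ?f x" by real_asymp
  then obtain hi where hi: "0 < ?f hi"
    by (meson eventually_at_top_linorder order_refl)
  have "\<forall>\<^sub>F x in at_bot. ?f x < 0" by real_asymp
  then obtain N where "\<And>x. x \<le> N \<Longrightarrow> ?f x < 0"
    by (auto simp: eventually_at_bot_linorder)
  then have lo: "?f (min N hi) < 0" by simp
  have "\<exists>a\<ge>min N hi. a \<le> hi \<and> ?f a = 0"
    using lo hi by (intro IVT') (auto intro!: continuous_intros)
  then show ?thesis using that by blast
qed

definition cubic_discr :: "real \<Rightarrow> real \<Rightarrow> real \<Rightarrow> real" where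
  "cubic_discr b2 b1 b0 =
     b2^2 * b1^2 - 4 * b1^3 - 4 * b2^3 * b0 - 27 * b0^2 + 18 * b2 * b1 * b0"

lemma cubic_discr_linear_times_quadratic:
  "cubic_discr (p - a) (q - a * p) (- (a * q)) = (a^2 + p * a + q)^2 * (p^2 - 4 * q)"
  unfolding cubic_discr_def by algebra

lemma cubic_discr_resolvent:
  "27 * cubic_discr b2 b1 b0 = 4 * (b2^2 - 3 * b1)^3 - (2 * b2^3 - 9 * b2 * b1 + 27 * b0)^2"
  unfolding cubic_discr_def by algebra

lemma quadratic_pos_if_discr_neg:
  fixes p q a :: real
  assumes "p^2 < 4 * q"
  shows "0 < a^2 + p * a + q"
proof -
  have "4 * (a^2 + p * a + q) = (2 * a + p)^2 + (4 * q - p^2)"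
    by (simp add: algebra_simps power2_eq_square)
  then show ?thesis
    using assms by (smt (verit) zero_le_power2)
qed

lemma real_cubic_linear_quadratic_factor:
  fixes b2 b1 b0 :: real
  obtains a p q where "b2 = p - a" "b1 = q - a * p" "b0 = - (a * q)"
proof -
  obtain a where "a^3 + b2 * a^2 + b1 * a + b0 = 0"
    by (rule real_cubic_has_root)
  then have "b0 = - a * (b1 + a * (b2 + a))"
    by (simp add: algebra_simps power2_eq_square power3_eq_cube)
  then show ?thesis
    using that[of "b2 + a" a "b1 + a * (b2 + a)"] by simp
qed

lemma real_cubic_three_real_roots:
  fixes b2 b1 b0 :: real
  assumes "0 \<le> cubic_discr b2 b1 b0"
  obtains a b c where "b2 = - (a + b + c)" "b1 = a * b + b * c + c * a" "b0 = - (a * b * c)"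
proof -
  obtain a p q where split: "b2 = p - a" "b1 = q - a * p" "b0 = - (a * q)"
    by (rule real_cubic_linear_quadratic_factor)
  have "0 \<le> p^2 - 4 * q"
  proof (rule ccontr)
    assume "\<not> 0 \<le> p^2 - 4 * q"
    then have "(a^2 + p * a + q)^2 * (p^2 - 4 * q) < 0"
      using quadratic_pos_if_discr_neg[of p q a] by (simp add: mult_pos_neg)
    then show False
      using assms by (simp add: split cubic_discr_linear_times_quadratic)
  qed
  define t where "t = sqrt (p^2 - 4 * q)"
  define b c where "b = (- p + t) / 2" and "c = (- p - t) / 2"
  have "t^2 = p^2 - 4 * q"
    unfolding t_def using \<open>0 \<le> p^2 - 4 * q\<close> by simp
  then have pq: "p = - (b + c)" "q = b * c"
    unfolding b_def c_def by (simp_all add: field_simps power2_eq_square)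
  have "b2 = - (a + b + c)" "b1 = a * b + b * c + c * a" "b0 = - (a * b * c)"
    by (simp_all add: split pq algebra_simps)
  then show ?thesis
    by (rule that)
qed

lemma real_cubic_conj_roots:
  fixes b2 b1 b0 :: real
  assumes "cubic_discr b2 b1 b0 < 0"
  obtains r z where "Im z \<noteq> 0" "b2 = - (r + 2 * Re z)"
    "b1 = Re z^2 + Im z^2 + 2 * r * Re z" "b0 = - (r * (Re z^2 + Im z^2))"
proof -
  obtain a p q where split: "b2 = p - a" "b1 = q - a * p" "b0 = - (a * q)"
    by (rule real_cubic_linear_quadratic_factor)
  have "p^2 - 4 * q < 0"
    using assms by (simp add: split cubic_discr_linear_times_quadratic mult_less_0_iff)
  define t where "t = sqrt (4 * q - p^2)"
  have "0 < t" "t^2 = 4 * q - p^2"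
    unfolding t_def using \<open>p^2 - 4 * q < 0\<close> by simp_all
  then have "q = (- p / 2)^2 + (t / 2)^2"
    by (simp add: field_simps power2_eq_square)
  then show ?thesis
    using that[of "Complex (- p / 2) (t / 2)" a] split \<open>0 < t\<close> by (simp add: algebra_simps)
qed

lemma cubic_eq_prod_real_roots:
  "x^3 + of_real (- (a + b + c)) * x^2 + of_real (a * b + b * c + c * a) * x + of_real (- (a * b * c))
     = (x - of_real a) * (x - of_real b) * (x - complex_of_real c)"
  by (simp add: algebra_simps power2_eq_square power3_eq_cube)

lemma cubic_eq_prod_conj_roots:
  "x^3 + of_real (- (r + 2 * Re z)) * x^2 + of_real (Re z^2 + Im z^2 + 2 * r * Re z) * x
      + of_real (- (r * (Re z^2 + Im z^2)))
     = (x - complex_of_real r) * (x - z) * (x - cnj z)"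
proof -
  have "(x - z) * (x - cnj z) = x^2 - (z + cnj z) * x + z * cnj z"
    by (simp add: algebra_simps power2_eq_square)
  also have "\<dots> = x^2 - of_real (2 * Re z) * x + of_real (Re z^2 + Im z^2)"
    by (simp add: complex_add_cnj complex_mult_cnj)
  finally have "(x - of_real r) * (x - z) * (x - cnj z)
      = (x - of_real r) * (x^2 - of_real (2 * Re z) * x + of_real (Re z^2 + Im z^2))"
    by (simp add: mult.assoc)
  then show ?thesis
    by (simp add: algebra_simps power2_eq_square power3_eq_cube)
qed

lemma cubic_root_neg_if_coeffs_pos:
  fixes r b2 b1 b0 :: real
  assumes "r^3 + b2 * r^2 + b1 * r + b0 = 0" "0 \<le> b2" "0 \<le> b1" "0 < b0"
  shows "r < 0"
proof (rule ccontr)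
  assume "\<not> r < 0"
  then have "0 \<le> r^3" "0 \<le> b2 * r^2" "0 \<le> b1 * r"
    using assms by simp_all
  then show False
    using assms by linarith
qed

lemma neg_real_and_stable_pairI:
  fixes A :: "real^3^3"
  assumes char: "\<And>x. char_poly_fun A x = x^3 + of_real b2 * x^2 + of_real b1 * x + of_real b0"
    and "0 < b2" "0 < b1" "0 < b0" and hurwitz: "b0 < b2 * b1"
    and "cubic_discr b2 b1 b0 < 0"
  shows "neg_real_and_stable_pair A"
proof -
  obtain r z where z: "Im z \<noteq> 0" and vieta: "b2 = - (r + 2 * Re z)"
      "b1 = Re z^2 + Im z^2 + 2 * r * Re z" "b0 = - (r * (Re z^2 + Im z^2))"
    using real_cubic_conj_roots \<open>cubic_discr b2 b1 b0 < 0\<close> by blast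
  have "r^3 + b2 * r^2 + b1 * r + b0 = 0"
    unfolding vieta by algebra
  then have "r < 0"
    using cubic_root_neg_if_coeffs_pos assms by (meson less_imp_le)
  have "b2 * b1 - b0 = - 2 * Re z * ((r + Re z)^2 + Im z^2)"
    unfolding vieta by algebra
  moreover have "0 < (r + Re z)^2 + Im z^2"
    using z by (simp add: add_nonneg_pos)
  ultimately have "Re z < 0"
    using hurwitz by (smt (verit) mult_nonneg_nonneg mult_nonpos_nonneg)
  show ?thesis
    unfolding neg_real_and_stable_pair_def
    using \<open>r < 0\<close> \<open>Re z < 0\<close> z char cubic_eq_prod_conj_roots vieta by metis
qed

lemma three_neg_realI:
  fixes A :: "real^3^3"
  assumes char: "\<And>x. char_poly_fun A x = x^3 + of_real b2 * x^2 + of_real b1 * x + of_real b0"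
    and "0 \<le> b2" "0 \<le> b1" "0 < b0" and "0 \<le> cubic_discr b2 b1 b0"
  shows "three_neg_real A"
proof -
  obtain a b c where vieta: "b2 = - (a + b + c)" "b1 = a * b + b * c + c * a" "b0 = - (a * b * c)"
    using real_cubic_three_real_roots \<open>0 \<le> cubic_discr b2 b1 b0\<close> by blast
  have "r < 0" if "r \<in> {a, b, c}" for r
  proof (rule cubic_root_neg_if_coeffs_pos)
    show "r^3 + b2 * r^2 + b1 * r + b0 = 0"
      using that unfolding vieta by (auto simp: algebra_simps power2_eq_square power3_eq_cube)
  qed (use assms in auto)
  then show ?thesis
    unfolding three_neg_real_def using char cubic_eq_prod_real_roots vieta by (metis insertCI)
qed

lemma pos_real_and_stable_pairI:
  fixes A :: "real^3^3"
  assumes char: "\<And>x. char_poly_fun A x = x^3 + of_real b2 * x^2 + of_real b1 * x + of_real b0"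
    and "0 < b2" "b0 < 0" and "cubic_discr b2 b1 b0 < 0"
  shows "pos_real_and_stable_pair A"
proof -
  obtain r z where z: "Im z \<noteq> 0" and vieta: "b2 = - (r + 2 * Re z)"
      "b1 = Re z^2 + Im z^2 + 2 * r * Re z" "b0 = - (r * (Re z^2 + Im z^2))"
    using real_cubic_conj_roots \<open>cubic_discr b2 b1 b0 < 0\<close> by blast
  have "0 < Re z^2 + Im z^2"
    using z by (simp add: add_nonneg_pos)
  then have "0 < r"
    using vieta(3) \<open>b0 < 0\<close> by (simp add: zero_less_mult_iff)
  then have "Re z < 0"
    using vieta(1) \<open>0 < b2\<close> by linarith
  show ?thesis
    unfolding pos_real_and_stable_pair_def
    using \<open>0 < r\<close> \<open>Re z < 0\<close> z char cubic_eq_prod_conj_roots vieta by metis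
qed

lemma one_pos_two_neg_if_prod_pos_sum_neg:
  fixes a b c :: real
  assumes "0 < a * b * c" "a + b + c < 0"
  shows "(0 < a \<and> b < 0 \<and> c < 0) \<or> (0 < b \<and> a < 0 \<and> c < 0) \<or> (0 < c \<and> a < 0 \<and> b < 0)"
  using assms by (auto simp: zero_less_mult_iff mult_less_0_iff)

lemma one_pos_two_neg_realI:
  fixes A :: "real^3^3"
  assumes char: "\<And>x. char_poly_fun A x = x^3 + of_real b2 * x^2 + of_real b1 * x + of_real b0"
    and "0 < b2" "b0 < 0" and "0 \<le> cubic_discr b2 b1 b0"
  shows "one_pos_two_neg_real A"
proof -
  obtain a b c where vieta: "b2 = - (a + b + c)" "b1 = a * b + b * c + c * a" "b0 = - (a * b * c)"
    using real_cubic_three_real_roots \<open>0 \<le> cubic_discr b2 b1 b0\<close> by blast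
  have roots: "char_poly_fun A x = (x - of_real a) * (x - of_real b) * (x - of_real c)" for x
    using char cubic_eq_prod_real_roots vieta by metis
  have "0 < a * b * c" "a + b + c < 0"
    using vieta assms by linarith+
  then consider "0 < a" "b < 0" "c < 0" | "0 < b" "a < 0" "c < 0" | "0 < c" "a < 0" "b < 0"
    using one_pos_two_neg_if_prod_pos_sum_neg by blast
  then show ?thesis
  proof cases
    case 1
    then show ?thesis
      unfolding one_pos_two_neg_real_def using roots by blast
  next
    case 2
    have "char_poly_fun A x = (x - of_real b) * (x - of_real a) * (x - of_real c)" for x
      using roots by (simp add: mult_ac)
    then show ?thesis
      unfolding one_pos_two_neg_real_def using 2 by blast
  next
    case 3
    have "char_poly_fun A x = (x - of_real c) * (x - of_real a) * (x - of_real b)" for x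
      using roots by (simp add: mult_ac)
    then show ?thesis
      unfolding one_pos_two_neg_real_def using 3 by blast
  qed
qed

lemma kur_radicand_nonneg_iff:
  assumes "0 < m"
  shows "0 \<le> 4 * (m + 1)^2 - 6 * m * (w + 2) \<longleftrightarrow> w \<le> kur_bound m"
proof -
  have radicand: "4 * (m + 1)^2 - 6 * m * (w + 2) = 2 * (2 * (m^2 - m + 1) - w * (3 * m))"
    by (simp add: algebra_simps power2_eq_square)
  have "w \<le> kur_bound m \<longleftrightarrow> w * (3 * m) \<le> 2 * (m^2 - m + 1)"
    unfolding kur_bound_def using assms by (simp add: pos_le_divide_eq)
  then show ?thesis
    unfolding radicand by auto
qed

lemma kur_cubic_discr_eq:
  assumes "m \<noteq> 0"
  shows "432 * m^6 * cubic_discr ((m + 1) / m) ((1 + w / 2) / m) (d / (2 * m))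
    = (4 * (m + 1)^2 - 6 * m * (w + 2))^3
      - (8 * (m + 1)^3 - 18 * m * (m + 1) * (w + 2) + 54 * m^2 * d)^2"
proof -
  define R where "R = 4 * (m + 1)^2 - 6 * m * (w + 2)"
  define B where "B = 8 * (m + 1)^3 - 18 * m * (m + 1) * (w + 2) + 54 * m^2 * d"
  have X: "((m + 1) / m)^2 - 3 * ((1 + w / 2) / m) = R / (4 * m^2)"
    unfolding R_def using assms by (simp add: field_simps power2_eq_square)
  have Y: "2 * ((m + 1) / m)^3 - 9 * ((m + 1) / m) * ((1 + w / 2) / m) + 27 * (d / (2 * m))
      = B / (4 * m^3)"
    unfolding B_def using assms by (simp add: field_simps power2_eq_square power3_eq_cube)
  have "(4 * m^2)^3 = 64 * m^6" "(4 * m^3)^2 = 16 * m^6"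
    by (simp_all add: power_mult_distrib flip: power_mult)
  then have expand: "16 * m^6 * (4 * (R / (4 * m^2))^3 - (B / (4 * m^3))^2) = R^3 - B^2"
    using assms by (simp add: power_divide field_simps)
  have "432 * m^6 * cubic_discr ((m + 1) / m) ((1 + w / 2) / m) (d / (2 * m))
      = 16 * m^6 * (27 * cubic_discr ((m + 1) / m) ((1 + w / 2) / m) (d / (2 * m)))"
    by simp
  also have "\<dots> = R^3 - B^2"
    unfolding cubic_discr_resolvent X Y expand ..
  finally show ?thesis
    unfolding R_def B_def .
qed

lemma Dplus_Dminus_eq:
  assumes "m \<noteq> 0" and "0 \<le> 4 * (m + 1)^2 - 6 * m * (w + 2)"
  shows "54 * m^2 * Dplus m w = (kur_S m w)^3 - (8 * (m + 1)^3 - 18 * m * (m + 1) * (w + 2))"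
    and "54 * m^2 * Dminus m w = - ((kur_S m w)^3) - (8 * (m + 1)^3 - 18 * m * (m + 1) * (w + 2))"
proof -
  have S2: "(kur_S m w)^2 = 4 * (m + 1)^2 - 6 * m * (w + 2)"
    unfolding kur_S_def using assms(2) by simp
  show "54 * m^2 * Dplus m w = (kur_S m w)^3 - (8 * (m + 1)^3 - 18 * m * (m + 1) * (w + 2))"
    using assms(1) S2 unfolding Dplus_def by (simp add: field_simps) algebra
  show "54 * m^2 * Dminus m w = - ((kur_S m w)^3) - (8 * (m + 1)^3 - 18 * m * (m + 1) * (w + 2))"
    using assms(1) S2 unfolding Dminus_def by (simp add: field_simps) algebra
qed

lemma Dminus_le_Dplus:
  assumes "0 < m" "w \<le> kur_bound m"
  shows "Dminus m w \<le> Dplus m w"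
proof -
  have R: "0 \<le> 4 * (m + 1)^2 - 6 * m * (w + 2)"
    using assms kur_radicand_nonneg_iff by blast
  then have "54 * m^2 * (Dplus m w - Dminus m w) = 2 * (kur_S m w)^3"
    using Dplus_Dminus_eq[of m w] assms(1) by (simp add: right_diff_distrib)
  moreover have "0 \<le> (kur_S m w)^3"
    unfolding kur_S_def using R by simp
  ultimately have "0 \<le> m^2 * (Dplus m w - Dminus m w)"
    by linarith
  then show ?thesis
    using assms(1) by (simp add: zero_le_mult_iff)
qed

lemma kur_cubic_discr_factor:
  assumes "0 < m" "w \<le> kur_bound m"
  shows "4 * m^2 * cubic_discr ((m + 1) / m) ((1 + w / 2) / m) (d / (2 * m))
    = 27 * ((Dplus m w - d) * (d - Dminus m w))"
proof -
  define S where "S = kur_S m w"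
  define P where "P = 8 * (m + 1)^3 - 18 * m * (m + 1) * (w + 2)"
  have R: "0 \<le> 4 * (m + 1)^2 - 6 * m * (w + 2)"
    using assms kur_radicand_nonneg_iff by blast
  then have "S^2 = 4 * (m + 1)^2 - 6 * m * (w + 2)"
    unfolding S_def kur_S_def by simp
  moreover have "(S^3)^2 = (S^2)^3"
    by (simp flip: power_mult)
  ultimately have "(4 * (m + 1)^2 - 6 * m * (w + 2))^3 = (S^3)^2"
    by simp
  \<comment> \<open>the resolvent \<open>R^3 - B^2\<close> is a difference of squares;
    \<open>Dplus\<close> and \<open>Dminus\<close> are the zeros of its two factors\<close>
  then have "432 * m^6 * cubic_discr ((m + 1) / m) ((1 + w / 2) / m) (d / (2 * m))
      = (S^3 - P - 54 * m^2 * d) * (S^3 + P + 54 * m^2 * d)"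
    using kur_cubic_discr_eq[of m w d] assms(1) unfolding P_def
    by (simp add: algebra_simps power2_eq_square)
  also have "S^3 - P - 54 * m^2 * d = 54 * m^2 * (Dplus m w - d)"
    using Dplus_Dminus_eq(1)[OF _ R] assms(1) unfolding S_def P_def right_diff_distrib by linarith
  also have "S^3 + P + 54 * m^2 * d = 54 * m^2 * (d - Dminus m w)"
    using Dplus_Dminus_eq(2)[OF _ R] assms(1) unfolding S_def P_def right_diff_distrib by linarith
  finally have "108 * m^4 * (4 * m^2 * cubic_discr ((m + 1) / m) ((1 + w / 2) / m) (d / (2 * m)))
      = 108 * m^4 * (27 * ((Dplus m w - d) * (d - Dminus m w)))"
    by algebra
  then show ?thesis
    by (rule mult_left_cancel[THEN iffD1, rotated]) (use assms(1) in simp)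
qed

lemma nonneg_prod_iff_between:
  fixes x y d :: real
  assumes "x \<le> y"
  shows "0 \<le> (y - d) * (d - x) \<longleftrightarrow> x \<le> d \<and> d \<le> y"
proof
  assume "0 \<le> (y - d) * (d - x)"
  then show "x \<le> d \<and> d \<le> y"
    using assms by (auto simp: zero_le_mult_iff)
qed simp

lemma kur_cubic_discr_nonneg_iff:
  assumes "0 < m"
  shows "0 \<le> cubic_discr ((m + 1) / m) ((1 + w / 2) / m) (d / (2 * m))
    \<longleftrightarrow> w \<le> kur_bound m \<and> Dminus m w \<le> d \<and> d \<le> Dplus m w"
proof (cases "w \<le> kur_bound m")
  case True
  have "0 \<le> cubic_discr ((m + 1) / m) ((1 + w / 2) / m) (d / (2 * m))
      \<longleftrightarrow> 0 \<le> 4 * m^2 * cubic_discr ((m + 1) / m) ((1 + w / 2) / m) (d / (2 * m))"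
    using assms by (simp add: zero_le_mult_iff)
  also have "\<dots> \<longleftrightarrow> 0 \<le> (Dplus m w - d) * (d - Dminus m w)"
    unfolding kur_cubic_discr_factor[OF assms True] by (simp add: zero_le_mult_iff)
  also have "\<dots> \<longleftrightarrow> Dminus m w \<le> d \<and> d \<le> Dplus m w"
    using Dminus_le_Dplus[OF assms True] by (rule nonneg_prod_iff_between)
  finally show ?thesis
    using True by simp
next
  case False
  then have "4 * (m + 1)^2 - 6 * m * (w + 2) < 0"
    using kur_radicand_nonneg_iff[OF assms, of w] by (meson not_le)
  then have "(4 * (m + 1)^2 - 6 * m * (w + 2))^3 < 0"
    by (simp add: power_less_zero_eq)
  then have "432 * m^6 * cubic_discr ((m + 1) / m) ((1 + w / 2) / m) (d / (2 * m)) < 0"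
    unfolding kur_cubic_discr_eq[OF less_imp_neq[OF assms, symmetric]]
    by (smt (verit) zero_le_power2)
  then show ?thesis
    using False assms by (simp add: mult_less_0_iff)
qed

lemma mem_Gamma1_iff:
  assumes "0 < m" "0 \<le> v" "v \<le> u"
  shows "(u, v) \<in> Gamma1 m \<longleftrightarrow>
    0 \<le> cubic_discr ((m + 1) / m) ((1 + u / 2) / m) ((u - v) / (2 * m))"
  using assms Dminus_le_Dplus[OF assms(1), of u]
  by (auto simp: Gamma1_def kur_cubic_discr_nonneg_iff)

lemma mem_Gamma2_iff:
  assumes "0 < m" "0 \<le> v" "v \<le> u"
  shows "(u, v) \<in> Gamma2 m \<longleftrightarrow>
    0 \<le> cubic_discr ((m + 1) / m) ((1 + v / 2) / m) ((v - u) / (2 * m))"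
  using assms Dminus_le_Dplus[OF assms(1), of v]
  by (auto simp: Gamma2_def kur_cubic_discr_nonneg_iff)

lemma P1_P3_eigenvalue_types:
  fixes A :: "real^3^3"
  assumes "0 < m" "0 \<le> v" "v < u"
    and char: "\<And>x. char_poly_fun A x = x^3 + of_real ((m + 1) / m) * x^2
      + of_real ((1 + u / 2) / m) * x + of_real ((u - v) / (2 * m))"
  shows "((u, v) \<notin> Gamma1 m \<longrightarrow> neg_real_and_stable_pair A)
    \<and> ((u, v) \<in> Gamma1 m \<longrightarrow> three_neg_real A)"
proof -
  have pos: "0 < (m + 1) / m" "0 < (1 + u / 2) / m" "0 < (u - v) / (2 * m)"
    using assms(1-3) by simp_all
  have "(m + 1) / m * ((1 + u / 2) / m) - (u - v) / (2 * m)
      = (2 * (m + 1) + u + m * v) / (2 * m^2)"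
    using assms(1) by (simp add: field_simps power2_eq_square)
  moreover have "0 < (2 * (m + 1) + u + m * v) / (2 * m^2)"
    using assms(1-3) by (intro divide_pos_pos add_pos_nonneg) auto
  ultimately have hurwitz: "(u - v) / (2 * m) < (m + 1) / m * ((1 + u / 2) / m)"
    by linarith
  show ?thesis
    using mem_Gamma1_iff[OF assms(1,2) less_imp_le[OF assms(3)]] pos hurwitz
    by (auto intro: neg_real_and_stable_pairI[OF char] three_neg_realI[OF char])
qed

lemma P2_P4_eigenvalue_types:
  fixes A :: "real^3^3"
  assumes "0 < m" "0 \<le> v" "v < u"
    and char: "\<And>x. char_poly_fun A x = x^3 + of_real ((m + 1) / m) * x^2
      + of_real ((1 + v / 2) / m) * x + of_real ((v - u) / (2 * m))"
  shows "((u, v) \<notin> Gamma2 m \<longrightarrow> pos_real_and_stable_pair A)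
    \<and> ((u, v) \<in> Gamma2 m \<longrightarrow> one_pos_two_neg_real A)"
proof -
  have "0 < (m + 1) / m" "(v - u) / (2 * m) < 0"
    using assms(1-3) by (simp_all add: divide_neg_pos)
  then show ?thesis
    using mem_Gamma2_iff[OF assms(1,2) less_imp_le[OF assms(3)]]
    by (auto intro: pos_real_and_stable_pairI[OF char] one_pos_two_neg_realI[OF char])
qed

lemma kur_u_v_bounds:
  assumes "0 < \<alpha>" "0 \<le> \<omega>" "2 * \<omega> < \<alpha>"
  shows "0 \<le> kur_v \<alpha> \<omega>" "kur_v \<alpha> \<omega> < kur_u \<alpha> \<omega>"
proof -
  have "(2 * \<omega>)^2 < \<alpha>^2"
    using assms by (intro power_strict_mono) auto
  then have "0 < sqrt (\<alpha>^2 - 4 * \<omega>^2)"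
    by (simp add: power_mult_distrib)
  moreover have "sqrt (\<alpha>^2 - 4 * \<omega>^2) \<le> sqrt (\<alpha>^2)"
    using assms(2) by (intro real_sqrt_le_mono) simp
  ultimately show "0 \<le> kur_v \<alpha> \<omega>" "kur_v \<alpha> \<omega> < kur_u \<alpha> \<omega>"
    using assms(1) by (simp_all add: kur_u_def kur_v_def)
qed

lemma kur_theta_cos_sin_sq:
  assumes "0 < \<alpha>" "0 \<le> \<omega>" "2 * \<omega> < \<alpha>"
  shows "\<alpha> * cos (kur_theta \<alpha> \<omega>)^2 = kur_u \<alpha> \<omega> / 2"
    and "\<alpha> * sin (kur_theta \<alpha> \<omega>)^2 = kur_v \<alpha> \<omega> / 2"
proof -
  define y where "y = 2 * \<omega> / \<alpha>"
  have "0 \<le> y" "y < 1"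
    unfolding y_def using assms by simp_all
  then have "cos (2 * kur_theta \<alpha> \<omega>) = sqrt (1 - y^2)"
    unfolding kur_theta_def y_def by (simp add: cos_arcsin)
  moreover have "\<alpha> * sqrt (1 - y^2) = sqrt (\<alpha>^2 - 4 * \<omega>^2)"
  proof -
    have "\<alpha>^2 - 4 * \<omega>^2 = \<alpha>^2 * (1 - y^2)"
      unfolding y_def using assms(1) by (simp add: field_simps power2_eq_square)
    then show ?thesis
      using assms(1) by (simp add: real_sqrt_mult)
  qed
  ultimately have cos2: "\<alpha> * cos (2 * kur_theta \<alpha> \<omega>) = sqrt (\<alpha>^2 - 4 * \<omega>^2)"
    by simp
  then show "\<alpha> * cos (kur_theta \<alpha> \<omega>)^2 = kur_u \<alpha> \<omega> / 2"
    unfolding kur_u_def cos_double_cos by (simp add: algebra_simps)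
  from cos2 show "\<alpha> * sin (kur_theta \<alpha> \<omega>)^2 = kur_v \<alpha> \<omega> / 2"
    unfolding kur_v_def cos_double_sin by (simp add: algebra_simps)
qed

lemma char_poly_fun_kur_jacobian_P1_P3:
  assumes "0 < m" "0 < \<alpha>" "0 \<le> \<omega>" "2 * \<omega> < \<alpha>" "p \<in> {P1 \<alpha> \<omega>, P3 \<alpha> \<omega>}"
  shows "char_poly_fun (kur_jacobian m \<alpha> \<omega> p) x = x^3 + of_real ((m + 1) / m) * x^2
    + of_real ((1 + kur_u \<alpha> \<omega> / 2) / m) * x + of_real ((kur_u \<alpha> \<omega> - kur_v \<alpha> \<omega>) / (2 * m))"
proof -
  let ?t = "kur_theta \<alpha> \<omega>"
  have "p$3 * cos (p$1) = \<alpha> * cos ?t^2" "\<alpha> * sin (p$1)^2 = \<alpha> * sin ?t^2"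
    using assms(5) by (auto simp: P1_def P3_def cos_add sin_add power2_eq_square)
  then have "p$3 * cos (p$1) = kur_u \<alpha> \<omega> / 2" "\<alpha> * sin (p$1)^2 = kur_v \<alpha> \<omega> / 2"
    using kur_theta_cos_sin_sq[OF assms(2-4)] by simp_all
  then have coeffs: "(1 + p$3 * cos (p$1)) / m = (1 + kur_u \<alpha> \<omega> / 2) / m"
    "(p$3 * cos (p$1) - \<alpha> * sin (p$1)^2) / m = (kur_u \<alpha> \<omega> - kur_v \<alpha> \<omega>) / (2 * m)"
    using assms(1) by (simp_all add: field_simps)
  have "m \<noteq> 0"
    using assms(1) by simp
  show ?thesis
    unfolding char_poly_fun_kur_jacobian[OF \<open>m \<noteq> 0\<close>] coeffs ..
qed

lemma char_poly_fun_kur_jacobian_P2_P4: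
  assumes "0 < m" "0 < \<alpha>" "0 \<le> \<omega>" "2 * \<omega> < \<alpha>" "p \<in> {P2 \<alpha> \<omega>, P4 \<alpha> \<omega>}"
  shows "char_poly_fun (kur_jacobian m \<alpha> \<omega> p) x = x^3 + of_real ((m + 1) / m) * x^2
    + of_real ((1 + kur_v \<alpha> \<omega> / 2) / m) * x + of_real ((kur_v \<alpha> \<omega> - kur_u \<alpha> \<omega>) / (2 * m))"
proof -
  let ?t = "kur_theta \<alpha> \<omega>"
  have "p$3 * cos (p$1) = \<alpha> * sin ?t^2" "\<alpha> * sin (p$1)^2 = \<alpha> * cos ?t^2"
    using assms(5) by (auto simp: P2_def P4_def cos_diff sin_diff power2_eq_square)
  then have "p$3 * cos (p$1) = kur_v \<alpha> \<omega> / 2" "\<alpha> * sin (p$1)^2 = kur_u \<alpha> \<omega> / 2"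
    using kur_theta_cos_sin_sq[OF assms(2-4)] by simp_all
  then have coeffs: "(1 + p$3 * cos (p$1)) / m = (1 + kur_v \<alpha> \<omega> / 2) / m"
    "(p$3 * cos (p$1) - \<alpha> * sin (p$1)^2) / m = (kur_v \<alpha> \<omega> - kur_u \<alpha> \<omega>) / (2 * m)"
    using assms(1) by (simp_all add: field_simps)
  have "m \<noteq> 0"
    using assms(1) by simp
  show ?thesis
    unfolding char_poly_fun_kur_jacobian[OF \<open>m \<noteq> 0\<close>] coeffs ..
qed

theorem proposition1:
  fixes m \<alpha> \<omega> :: real
  assumes "m > 0" and "\<alpha> > 0" and "\<omega> \<ge> 0" and "\<alpha> > 2 * \<omega>"
  shows "((kur_u \<alpha> \<omega>, kur_v \<alpha> \<omega>) \<notin> Gamma1 m \<longrightarrow>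
            neg_real_and_stable_pair (kur_jacobian m \<alpha> \<omega> (P1 \<alpha> \<omega>)) \<and>
            neg_real_and_stable_pair (kur_jacobian m \<alpha> \<omega> (P3 \<alpha> \<omega>)))
       \<and> ((kur_u \<alpha> \<omega>, kur_v \<alpha> \<omega>) \<in> Gamma1 m \<longrightarrow>
            three_neg_real (kur_jacobian m \<alpha> \<omega> (P1 \<alpha> \<omega>)) \<and>
            three_neg_real (kur_jacobian m \<alpha> \<omega> (P3 \<alpha> \<omega>)))
       \<and> ((kur_u \<alpha> \<omega>, kur_v \<alpha> \<omega>) \<notin> Gamma2 m \<longrightarrow>
            pos_real_and_stable_pair (kur_jacobian m \<alpha> \<omega> (P2 \<alpha> \<omega>)) \<and>
            pos_real_and_stable_pair (kur_jacobian m \<alpha> \<omega> (P4 \<alpha> \<omega>)))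
       \<and> ((kur_u \<alpha> \<omega>, kur_v \<alpha> \<omega>) \<in> Gamma2 m \<longrightarrow>
            one_pos_two_neg_real (kur_jacobian m \<alpha> \<omega> (P2 \<alpha> \<omega>)) \<and>
            one_pos_two_neg_real (kur_jacobian m \<alpha> \<omega> (P4 \<alpha> \<omega>)))"
proof -
  note uv = kur_u_v_bounds[OF assms(2-4)]
  have P13: "((kur_u \<alpha> \<omega>, kur_v \<alpha> \<omega>) \<notin> Gamma1 m \<longrightarrow>
        neg_real_and_stable_pair (kur_jacobian m \<alpha> \<omega> p))
      \<and> ((kur_u \<alpha> \<omega>, kur_v \<alpha> \<omega>) \<in> Gamma1 m \<longrightarrow> three_neg_real (kur_jacobian m \<alpha> \<omega> p))"
    if "p \<in> {P1 \<alpha> \<omega>, P3 \<alpha> \<omega>}" for p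
    using P1_P3_eigenvalue_types[OF assms(1) uv char_poly_fun_kur_jacobian_P1_P3[OF assms that]] .
  have P24: "((kur_u \<alpha> \<omega>, kur_v \<alpha> \<omega>) \<notin> Gamma2 m \<longrightarrow>
        pos_real_and_stable_pair (kur_jacobian m \<alpha> \<omega> p))
      \<and> ((kur_u \<alpha> \<omega>, kur_v \<alpha> \<omega>) \<in> Gamma2 m \<longrightarrow> one_pos_two_neg_real (kur_jacobian m \<alpha> \<omega> p))"
    if "p \<in> {P2 \<alpha> \<omega>, P4 \<alpha> \<omega>}" for p
    using P2_P4_eigenvalue_types[OF assms(1) uv char_poly_fun_kur_jacobian_P2_P4[OF assms that]] .
  show ?thesis
    using P13[of "P1 \<alpha> \<omega>"] P13[of "P3 \<alpha> \<omega>"] P24[of "P2 \<alpha> \<omega>"] P24[of "P4 \<alpha> \<omega>"]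
    by blast
qed

end
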